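(* Let $\mathcal H$ be an infinite-dimensional complex Hilbert space and let $\mathcal V_f(\mathcal H)$ be the set of all positive bilinear forms $t$ on $\mathcal H$ with dense domain $D(t)$ such that $D(t)=\mathcal H$ whenever $t$ is bounded. For $t,s\in\mathcal V_f(\mathcal H)$, let $t\oplus s$ be defined if and only if $t$ is bounded, or $s$ is bounded, or $D(t)=D(s)$, and in that case $t\oplus s=t+s$. Then $(\mathcal V_f(\mathcal H);\oplus,o)$ is a generalized effect algebra.
   Context: The inner product is linear in the first argument. A bilinear form $t$ on $\mathcal H$ is a map $t:D(t)\times D(t)\to\mathbb C$, $D(t)$ a dense linear subspace, linear in the first and antilinear in the second argument. $t$ is positive if $t(x,x)\ge0$ for all $x\in D(t)$; bounded if $\sup\{t(x,x)\mid x\in D(t),\|x\|=1\}<\infty$, unbounded otherwise. The sum $t+s$ has domain $D(t)\cap D(s)$ and $(t+s)(x,y)=t(x,y)+s(x,y)$. $o$ denotes the zero form with domain $\mathcal H$. A generalized effect algebra is a structure $(E;\oplus,0)$ with $0\in E$ and a partial binary operation $\oplus$ such that for all $x,y,z\in E$: (i) $x\oplus y=y\oplus x$ if one side is defined; (ii) $(x\oplus y)\oplus z=x\oplus(y\oplus z)$ if one side is defined; (iii) $x\oplus 0$ is defined and equals $x$; (iv) $x\oplus y=x\oplus z$ implies $y=z$; (v) $x\oplus y=0$ implies $x=y=0$. *)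

theory Defs
  imports "HOL-Analysis.Analysis"
begin

class complex_vector = ab_group_add +
  fixes scaleC :: "complex \<Rightarrow> 'a \<Rightarrow> 'a" (infixr "*\<^sub>C" 75)
  assumes scaleC_add_right: "a *\<^sub>C (x + y) = a *\<^sub>C x + a *\<^sub>C y"
    and scaleC_add_left: "(a + b) *\<^sub>C x = a *\<^sub>C x + b *\<^sub>C x"
    and scaleC_scaleC: "a *\<^sub>C (b *\<^sub>C x) = (a * b) *\<^sub>C x"
    and scaleC_one: "1 *\<^sub>C x = x"

class complex_inner = complex_vector + real_normed_vector +
  fixes cinner :: "'a \<Rightarrow> 'a \<Rightarrow> complex"
  assumes scaleR_scaleC: "scaleR r x = complex_of_real r *\<^sub>C x"
    and cinner_add_left: "cinner (x + y) z = cinner x z + cinner y z"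
    and cinner_scaleC_left: "cinner (a *\<^sub>C x) y = a * cinner x y"
    and cinner_commute: "cinner y x = cnj (cinner x y)"
    and cinner_nonneg: "0 \<le> Re (cinner x x)"
    and cinner_eq_zero_iff: "cinner x x = 0 \<longleftrightarrow> x = 0"
    and norm_cinner: "norm x = sqrt (Re (cinner x x))"

class chilbert_space = complex_inner + complete_space

definition cspan :: "'a::complex_vector set \<Rightarrow> 'a set" where
  "cspan S = {(\<Sum>x\<in>F. c x *\<^sub>C x) | F c. finite F \<and> F \<subseteq> S}"

definition infinite_dimensional :: "'a::complex_vector itself \<Rightarrow> bool" where
  "infinite_dimensional _ \<longleftrightarrow> \<not> (\<exists>S::'a set. finite S \<and> cspan S = UNIV)"

definition csubspace :: "'a::complex_vector set \<Rightarrow> bool" where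
  "csubspace D \<longleftrightarrow> 0 \<in> D \<and> (\<forall>x\<in>D. \<forall>y\<in>D. x + y \<in> D) \<and> (\<forall>a. \<forall>x\<in>D. a *\<^sub>C x \<in> D)"

text \<open>A form is represented by its domain together with its values; to make
  equality of forms coincide with equality of pairs, values outside
  domain \<times> domain are normalised to 0.\<close>
type_synonym 'a cform = "'a set \<times> ('a \<Rightarrow> 'a \<Rightarrow> complex)"

definition dom_form :: "'a cform \<Rightarrow> 'a set" where "dom_form t = fst t"
definition app_form :: "'a cform \<Rightarrow> 'a \<Rightarrow> 'a \<Rightarrow> complex" where "app_form t = snd t"

definition is_form :: "'a::chilbert_space cform \<Rightarrow> bool" where
  "is_form t \<longleftrightarrow> (let D = dom_form t; f = app_form t in
     csubspace D \<and> closure D = UNIV \<and>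
     (\<forall>x\<in>D. \<forall>y\<in>D. \<forall>z\<in>D. f (x + y) z = f x z + f y z) \<and>
     (\<forall>a. \<forall>x\<in>D. \<forall>y\<in>D. f (a *\<^sub>C x) y = a * f x y) \<and>
     (\<forall>x\<in>D. \<forall>y\<in>D. \<forall>z\<in>D. f x (y + z) = f x y + f x z) \<and>
     (\<forall>a. \<forall>x\<in>D. \<forall>y\<in>D. f x (a *\<^sub>C y) = cnj a * f x y) \<and>
     (\<forall>x y. (x \<notin> D \<or> y \<notin> D) \<longrightarrow> f x y = 0))"

definition form_positive :: "'a::chilbert_space cform \<Rightarrow> bool" where
  "form_positive t \<longleftrightarrow> (\<forall>x\<in>dom_form t. Im (app_form t x x) = 0 \<and> 0 \<le> Re (app_form t x x))"

definition form_bounded :: "'a::chilbert_space cform \<Rightarrow> bool" where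
  "form_bounded t \<longleftrightarrow> (\<exists>C. \<forall>x\<in>dom_form t. norm x = 1 \<longrightarrow> Re (app_form t x x) \<le> C)"

definition form_sum :: "'a cform \<Rightarrow> 'a cform \<Rightarrow> 'a cform" where
  "form_sum t s = (dom_form t \<inter> dom_form s,
     (\<lambda>x y. if x \<in> dom_form t \<inter> dom_form s \<and> y \<in> dom_form t \<inter> dom_form s
            then app_form t x y + app_form s x y else 0))"

definition zero_form :: "'a cform" where
  "zero_form = (UNIV, (\<lambda>x y. 0))"

definition Vf :: "'a::chilbert_space cform set" where
  "Vf = {t. is_form t \<and> form_positive t \<and> (form_bounded t \<longrightarrow> dom_form t = UNIV)}"

definition Vf_oplus :: "'a::chilbert_space cform \<Rightarrow> 'a cform \<Rightarrow> 'a cform option" where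
  "Vf_oplus t s = (if form_bounded t \<or> form_bounded s \<or> dom_form t = dom_form s
                   then Some (form_sum t s) else None)"

text \<open>A partial operation on E is a map to option (None = undefined), closed in E.
  Axiom (ii): if one side is defined, so is the other and they agree.\<close>
definition gen_effect_algebra :: "'a set \<Rightarrow> ('a \<Rightarrow> 'a \<Rightarrow> 'a option) \<Rightarrow> 'a \<Rightarrow> bool" where
  "gen_effect_algebra E op z \<longleftrightarrow>
     z \<in> E \<and>
     (\<forall>x\<in>E. \<forall>y\<in>E. \<forall>u. op x y = Some u \<longrightarrow> u \<in> E) \<and>
     (\<forall>x\<in>E. \<forall>y\<in>E. op x y = op y x) \<and>
     (\<forall>x\<in>E. \<forall>y\<in>E. \<forall>w\<in>E.
        Option.bind (op x y) (\<lambda>u. op u w) = Option.bind (op y w) (\<lambda>v. op x v)) \<and>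
     (\<forall>x\<in>E. op x z = Some x) \<and>
     (\<forall>x\<in>E. \<forall>y\<in>E. \<forall>w\<in>E. op x y \<noteq> None \<and> op x y = op x w \<longrightarrow> y = w) \<and>
     (\<forall>x\<in>E. \<forall>y\<in>E. op x y = Some z \<longrightarrow> x = z \<and> y = z)"

end

theory Submission
  imports Defs
begin

text \<open>Everything is routine except cancellation, which rests on two facts. Positive forms
  with equal domains and equal quadratic forms coincide (polarization). A bounded positive
  form defined on all of the space has a continuous quadratic form, so two such forms that
  agree on a dense subspace are equal. Hence if \<open>x \<oplus> y = x \<oplus> w\<close> with \<open>x\<close> unbounded and
  \<open>y\<close>, \<open>w\<close> bounded, agreement on the dense domain of \<open>x\<close> forces \<open>y = w\<close>; in all other cases
  the domains of \<open>y\<close> and \<open>w\<close> are contained in that of \<open>x\<close> or a bound passes between them.\<close>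

lemma dom_form_sum [simp]: "dom_form (form_sum t s) = dom_form t \<inter> dom_form s"
  by (simp add: form_sum_def dom_form_def)

lemma app_form_sum:
  "app_form (form_sum t s) a b =
    (if a \<in> dom_form t \<inter> dom_form s \<and> b \<in> dom_form t \<inter> dom_form s
     then app_form t a b + app_form s a b else 0)"
  by (simp add: form_sum_def app_form_def dom_form_def)

lemma dom_zero_form [simp]: "dom_form zero_form = UNIV"
  by (simp add: zero_form_def dom_form_def)

lemma app_zero_form [simp]: "app_form zero_form a b = 0"
  by (simp add: zero_form_def app_form_def)

lemma form_sum_commute: "form_sum t s = form_sum s t"
  by (auto simp: form_sum_def Int_commute add.commute intro!: ext)

lemma form_sum_assoc: "form_sum (form_sum x y) w = form_sum x (form_sum y w)"
  unfolding form_sum_def by (auto simp: dom_form_def app_form_def intro!: ext)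

lemma csubspace_add: "csubspace D \<Longrightarrow> x \<in> D \<Longrightarrow> y \<in> D \<Longrightarrow> x + y \<in> D"
  and csubspace_scaleC: "csubspace D \<Longrightarrow> x \<in> D \<Longrightarrow> a *\<^sub>C x \<in> D"
  by (simp_all add: csubspace_def)

context
  fixes t :: "'a::chilbert_space cform"
  assumes form: "is_form t"
begin

lemma form_csubspace: "csubspace (dom_form t)"
  and form_dense: "closure (dom_form t) = UNIV"
  using form by (simp_all add: is_form_def Let_def)

lemma form_add_left:
    "x \<in> dom_form t \<Longrightarrow> y \<in> dom_form t \<Longrightarrow> z \<in> dom_form t \<Longrightarrow>
      app_form t (x + y) z = app_form t x z + app_form t y z"
  and form_add_right:
    "x \<in> dom_form t \<Longrightarrow> y \<in> dom_form t \<Longrightarrow> z \<in> dom_form t \<Longrightarrow>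
      app_form t x (y + z) = app_form t x y + app_form t x z"
  and form_scaleC_left:
    "x \<in> dom_form t \<Longrightarrow> y \<in> dom_form t \<Longrightarrow> app_form t (a *\<^sub>C x) y = a * app_form t x y"
  and form_scaleC_right:
    "x \<in> dom_form t \<Longrightarrow> y \<in> dom_form t \<Longrightarrow> app_form t x (a *\<^sub>C y) = cnj a * app_form t x y"
  and form_outside_dom: "x \<notin> dom_form t \<or> y \<notin> dom_form t \<Longrightarrow> app_form t x y = 0"
  using form by (simp_all add: is_form_def Let_def)

lemma form_scaleR_left:
    "x \<in> dom_form t \<Longrightarrow> y \<in> dom_form t \<Longrightarrow> app_form t (r *\<^sub>R x) y = r * app_form t x y"
  and form_scaleR_right:
    "x \<in> dom_form t \<Longrightarrow> y \<in> dom_form t \<Longrightarrow> app_form t x (r *\<^sub>R y) = r * app_form t x y"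
  by (simp_all add: scaleR_scaleC form_scaleC_left form_scaleC_right)

lemma form_add_add:
  assumes "u \<in> dom_form t" "v \<in> dom_form t"
  shows "app_form t (u + v) (u + v) =
    app_form t u u + app_form t u v + app_form t v u + app_form t v v"
  using assms csubspace_add[OF form_csubspace] by (simp add: form_add_left form_add_right)

end

lemma form_eqI:
  assumes "is_form t" "is_form s" "dom_form t = dom_form s"
    and "\<And>a b. a \<in> dom_form t \<Longrightarrow> b \<in> dom_form t \<Longrightarrow> app_form t a b = app_form s a b"
  shows "t = s"
proof -
  have "app_form t a b = app_form s a b" for a b
    using assms form_outside_dom[of t a b] form_outside_dom[of s a b]
    by (cases "a \<in> dom_form t \<and> b \<in> dom_form t") auto
  then show ?thesis
    using assms(3) unfolding dom_form_def app_form_def by (simp add: prod_eq_iff ext)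
qed

text \<open>Polarization: \<open>a + b\<close> recovers the symmetric part of the form and \<open>a + \<i> b\<close> the
  antisymmetric part.\<close>
lemma form_eq_if_quadratic_eq:
  assumes y: "is_form y" and w: "is_form w" and dom: "dom_form y = dom_form w"
    and quad: "\<And>z. z \<in> dom_form y \<Longrightarrow> app_form y z z = app_form w z z"
  shows "y = w"
proof (rule form_eqI[OF y w dom])
  fix a b assume a: "a \<in> dom_form y" and b: "b \<in> dom_form y"
  have ib: "\<i> *\<^sub>C b \<in> dom_form y"
    using b csubspace_scaleC[OF form_csubspace[OF y]] by blast
  have ab: "a + b \<in> dom_form y" and aib: "a + \<i> *\<^sub>C b \<in> dom_form y"
    using a b ib csubspace_add[OF form_csubspace[OF y]] by blast+
  have sym: "app_form y a b + app_form y b a = app_form w a b + app_form w b a"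
    using form_add_add[OF y a b] form_add_add[OF w, of a b] quad a b ab dom by auto
  have "app_form y a (\<i> *\<^sub>C b) + app_form y (\<i> *\<^sub>C b) a
      = app_form w a (\<i> *\<^sub>C b) + app_form w (\<i> *\<^sub>C b) a"
    using form_add_add[OF y a ib] form_add_add[OF w, of a "\<i> *\<^sub>C b"] quad a ib aib dom by auto
  then have "\<i> * (app_form y b a - app_form y a b) = \<i> * (app_form w b a - app_form w a b)"
    using a b dom by (simp add: form_scaleC_left[OF y] form_scaleC_left[OF w]
        form_scaleC_right[OF y] form_scaleC_right[OF w] algebra_simps)
  then have "app_form y a b - app_form y b a = app_form w a b - app_form w b a"
    by (metis minus_diff_eq mult_cancel_left complex_i_not_zero)
  with sym have "(app_form y a b + app_form y b a) + (app_form y a b - app_form y b a)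
      = (app_form w a b + app_form w b a) + (app_form w a b - app_form w b a)"
    by simp
  then show "app_form y a b = app_form w a b"
    by simp
qed

section \<open>Continuity of bounded positive forms\<close>

context
  fixes t :: "'a::chilbert_space cform"
  assumes form: "is_form t" and pos: "form_positive t" and full: "dom_form t = UNIV"
begin

lemma form_quadratic_nonneg: "0 \<le> Re (app_form t z z)"
  using pos full by (simp add: form_positive_def)

lemma form_quadratic_expand:
  "Re (app_form t (z + r *\<^sub>R h) (z + r *\<^sub>R h)) =
    Re (app_form t z z) + r * Re (app_form t z h + app_form t h z) + r * r * Re (app_form t h h)"
  using full by (simp add: form_add_left[OF form] form_add_right[OF form]
      form_scaleR_left[OF form] form_scaleR_right[OF form] algebra_simps)

text \<open>Positivity along the line through \<open>z\<close> in direction \<open>\<plusminus>h\<close>.\<close>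
lemma form_cross_term_bound:
  assumes "0 < r"
  shows "\<bar>Re (app_form t z h + app_form t h z)\<bar> * r \<le> Re (app_form t z z) + r * r * Re (app_form t h h)"
  using form_quadratic_nonneg[of "z + r *\<^sub>R h"] form_quadratic_nonneg[of "z + (- r) *\<^sub>R h"] assms
  unfolding form_quadratic_expand by (auto simp: abs_if algebra_simps)

lemma form_quadratic_le_norm:
  assumes "form_bounded t"
  obtains C where "\<And>h. Re (app_form t h h) \<le> C * (norm h)\<^sup>2"
proof -
  obtain C where C: "\<And>u. norm u = 1 \<Longrightarrow> Re (app_form t u u) \<le> C"
    using assms full unfolding form_bounded_def by blast
  have "Re (app_form t h h) \<le> C * (norm h)\<^sup>2" for h
  proof (cases "h = 0")
    case True
    have "app_form t 0 0 = app_form t 0 0 + app_form t 0 0"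
      using form_add_left[OF form, of 0 0 0] full by simp
    then show ?thesis using True by simp
  next
    case False
    define u where "u = (1 / norm h) *\<^sub>R h"
    have "norm u = 1" "h = norm h *\<^sub>R u"
      using False by (simp_all add: u_def)
    then have "app_form t h h = norm h * (norm h * app_form t u u)"
      using full by (metis form_scaleR_left[OF form] form_scaleR_right[OF form] UNIV_I)
    then have "Re (app_form t h h) = (norm h)\<^sup>2 * Re (app_form t u u)"
      by (simp add: power2_eq_square)
    also have "\<dots> \<le> (norm h)\<^sup>2 * C"
      using C[OF \<open>norm u = 1\<close>] by (simp add: mult_left_mono)
    finally show ?thesis by (simp add: mult.commute)
  qed
  then show thesis by (rule that)
qed

lemma form_quadratic_diff_bound:
  assumes C: "\<And>h. Re (app_form t h h) \<le> C * (norm h)\<^sup>2"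
  shows "\<bar>Re (app_form t (z + h) (z + h)) - Re (app_form t z z)\<bar>
    \<le> (Re (app_form t z z) + C) * norm h + C * (norm h)\<^sup>2"
proof (cases "h = 0")
  case False
  define n where "n = norm h"
  define p where "p = Re (app_form t z h + app_form t h z)"
  have n: "0 < n" using False by (simp add: n_def)
  have diff: "Re (app_form t (z + h) (z + h)) - Re (app_form t z z) = p + Re (app_form t h h)"
    using form_quadratic_expand[of z 1 h] by (simp add: p_def)
  have "\<bar>p\<bar> / n \<le> Re (app_form t z z) + Re (app_form t h h) / n\<^sup>2"
    using form_cross_term_bound[of "1 / n" z h] n by (simp add: p_def power2_eq_square)
  then have "\<bar>p\<bar> \<le> Re (app_form t z z) * n + Re (app_form t h h) / n"
    using n by (simp add: field_simps power2_eq_square)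
  also have "Re (app_form t h h) / n \<le> C * n"
    using C[of h] n by (simp add: n_def divide_le_eq power2_eq_square)
  finally show ?thesis
    unfolding diff using C[of h] form_quadratic_nonneg[of h] by (simp add: n_def algebra_simps)
qed simp

lemma isCont_form_quadratic:
  assumes "form_bounded t"
  shows "isCont (\<lambda>z. Re (app_form t z z)) z0"
proof -
  obtain C where C: "\<And>h. Re (app_form t h h) \<le> C * (norm h)\<^sup>2"
    using form_quadratic_le_norm[OF assms] by blast
  let ?q = "\<lambda>z. Re (app_form t z z)"
  have "((\<lambda>z. ?q z - ?q z0) \<longlongrightarrow> 0) (at z0)"
  proof (rule Lim_null_comparison)
    show "\<forall>\<^sub>F z in at z0. norm (?q z - ?q z0) \<le> (?q z0 + C) * norm (z - z0) + C * (norm (z - z0))\<^sup>2"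
      using form_quadratic_diff_bound[OF C, of z0]
      by (intro always_eventually) (metis add.commute diff_add_cancel real_norm_def)
    have "((\<lambda>z. (?q z0 + C) * norm (z - z0) + C * (norm (z - z0))\<^sup>2) \<longlongrightarrow>
        (?q z0 + C) * norm (z0 - z0) + C * (norm (z0 - z0))\<^sup>2) (at z0)"
      by (intro tendsto_intros)
    then show "((\<lambda>z. (?q z0 + C) * norm (z - z0) + C * (norm (z - z0))\<^sup>2) \<longlongrightarrow> 0) (at z0)"
      by simp
  qed
  then show ?thesis unfolding isCont_def by (rule LIM_zero_cancel)
qed

end

lemma VfD:
  assumes "t \<in> Vf"
  shows Vf_is_form: "is_form t" and Vf_positive: "form_positive t"
    and Vf_bounded_full: "form_bounded t \<Longrightarrow> dom_form t = UNIV"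
  using assms by (auto simp: Vf_def)

lemma Vf_quadratic_nonneg: "t \<in> Vf \<Longrightarrow> x \<in> dom_form t \<Longrightarrow> 0 \<le> Re (app_form t x x)"
  and Vf_quadratic_real: "t \<in> Vf \<Longrightarrow> x \<in> dom_form t \<Longrightarrow> Im (app_form t x x) = 0"
  by (auto simp: Vf_def form_positive_def)

lemma zero_form_in_Vf: "zero_form \<in> Vf"
  by (auto simp: Vf_def is_form_def csubspace_def form_positive_def)

lemma form_bounded_zero_form: "form_bounded zero_form"
  by (auto simp: form_bounded_def)

lemma Vf_eq_if_quadratic_eq_on_dense:
  assumes y: "y \<in> Vf" "form_bounded y" and w: "w \<in> Vf" "form_bounded w"
    and dense: "closure E = UNIV" and eq: "\<And>a. a \<in> E \<Longrightarrow> app_form y a a = app_form w a a"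
  shows "y = w"
proof -
  have Dy: "dom_form y = UNIV" and Dw: "dom_form w = UNIV"
    using y w Vf_bounded_full by blast+
  let ?S = "{z. Re (app_form y z z) = Re (app_form w z z)}"
  have "closed ?S"
    using isCont_form_quadratic[OF Vf_is_form Vf_positive Dy] isCont_form_quadratic[OF Vf_is_form Vf_positive Dw] y w
    by (intro closed_Collect_eq continuous_at_imp_continuous_on) auto
  moreover have "E \<subseteq> ?S" using eq by auto
  ultimately have "UNIV \<subseteq> ?S"
    using dense closure_minimal by metis
  then have "app_form y z z = app_form w z z" for z
    using Vf_quadratic_real[OF y(1), of z] Vf_quadratic_real[OF w(1), of z] Dy Dw
    by (auto simp: complex_eq_iff)
  then show ?thesis
    using form_eq_if_quadratic_eq[OF Vf_is_form[OF y(1)] Vf_is_form[OF w(1)]] Dy Dw by auto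
qed

lemma form_bounded_if_quadratic_eq:
  assumes "form_bounded y" "y \<in> Vf" "\<And>a. a \<in> dom_form w \<Longrightarrow> app_form w a a = app_form y a a"
  shows "form_bounded w"
  using assms Vf_bounded_full[OF assms(2)] unfolding form_bounded_def by (metis UNIV_I)

lemma form_bounded_form_sum_dest:
  assumes "s \<in> Vf" "form_bounded (form_sum t s)" "dom_form t \<subseteq> dom_form s"
  shows "form_bounded t"
proof -
  obtain C where C: "\<And>x. x \<in> dom_form t \<inter> dom_form s \<Longrightarrow> norm x = 1 \<Longrightarrow>
      Re (app_form (form_sum t s) x x) \<le> C"
    using assms(2) unfolding form_bounded_def by auto
  have "Re (app_form t x x) \<le> C" if "x \<in> dom_form t" "norm x = 1" for x
    using C[of x] that assms(3) Vf_quadratic_nonneg[OF assms(1), of x] by (auto simp: app_form_sum)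
  then show ?thesis unfolding form_bounded_def by blast
qed

lemma form_bounded_form_sum_iff:
  assumes t: "t \<in> Vf" and s: "s \<in> Vf"
    and def: "form_bounded t \<or> form_bounded s \<or> dom_form t = dom_form s"
  shows "form_bounded (form_sum t s) \<longleftrightarrow> form_bounded t \<and> form_bounded s"
proof
  assume b: "form_bounded (form_sum t s)"
  have "form_bounded t"
    using form_bounded_form_sum_dest[OF s b] def Vf_bounded_full[OF s] by auto
  moreover have "form_bounded s"
    using form_bounded_form_sum_dest[OF t, of s] b def Vf_bounded_full[OF t]
    by (auto simp: form_sum_commute)
  ultimately show "form_bounded t \<and> form_bounded s" ..
next
  assume "form_bounded t \<and> form_bounded s"
  then obtain C1 C2
    where "\<And>x. x \<in> dom_form t \<Longrightarrow> norm x = 1 \<Longrightarrow> Re (app_form t x x) \<le> C1"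
      and "\<And>x. x \<in> dom_form s \<Longrightarrow> norm x = 1 \<Longrightarrow> Re (app_form s x x) \<le> C2"
    unfolding form_bounded_def by blast
  then have "\<And>x. x \<in> dom_form (form_sum t s) \<Longrightarrow> norm x = 1 \<Longrightarrow>
      Re (app_form (form_sum t s) x x) \<le> C1 + C2"
    by (fastforce simp: app_form_sum intro: add_mono)
  then show "form_bounded (form_sum t s)" unfolding form_bounded_def by blast
qed

lemma form_sum_in_Vf:
  assumes t: "t \<in> Vf" and s: "s \<in> Vf"
    and def: "form_bounded t \<or> form_bounded s \<or> dom_form t = dom_form s"
  shows "form_sum t s \<in> Vf"
proof -
  have Ft: "is_form t" and Fs: "is_form s" using t s Vf_is_form by blast+
  let ?I = "dom_form t \<inter> dom_form s"
  have cs: "csubspace ?I"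
    using form_csubspace[OF Ft] form_csubspace[OF Fs] unfolding csubspace_def by auto
  text \<open>The definedness condition makes the intersection equal to one of the two domains.\<close>
  moreover have "closure ?I = UNIV"
    using def Vf_bounded_full[OF t] Vf_bounded_full[OF s] form_dense[OF Ft] form_dense[OF Fs] by auto
  moreover have "x + y \<in> ?I" "a *\<^sub>C x \<in> ?I" if "x \<in> ?I" "y \<in> ?I" for x y a
    using cs that unfolding csubspace_def by auto
  ultimately have "is_form (form_sum t s)"
    using cs unfolding is_form_def Let_def dom_form_sum
    by (auto simp: app_form_sum
        form_add_left[OF Ft] form_add_left[OF Fs] form_add_right[OF Ft] form_add_right[OF Fs]
        form_scaleC_left[OF Ft] form_scaleC_left[OF Fs]
        form_scaleC_right[OF Ft] form_scaleC_right[OF Fs] algebra_simps)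
  moreover have "form_positive (form_sum t s)"
    using Vf_quadratic_nonneg[OF t] Vf_quadratic_nonneg[OF s]
      Vf_quadratic_real[OF t] Vf_quadratic_real[OF s]
    by (auto simp: form_positive_def app_form_sum)
  moreover have "form_bounded (form_sum t s) \<Longrightarrow> dom_form (form_sum t s) = UNIV"
    using form_bounded_form_sum_iff[OF t s def] Vf_bounded_full[OF t] Vf_bounded_full[OF s] by auto
  ultimately show ?thesis unfolding Vf_def by blast
qed

lemma form_sum_zero_form:
  assumes "t \<in> Vf"
  shows "form_sum t zero_form = t"
proof (rule form_eqI)
  show "is_form (form_sum t zero_form)"
    using form_sum_in_Vf[OF assms zero_form_in_Vf] form_bounded_zero_form Vf_is_form by blast
qed (use Vf_is_form[OF assms] in \<open>auto simp: app_form_sum\<close>)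

section \<open>The generalized effect algebra axioms\<close>

lemma Vf_oplus_commute: "Vf_oplus a b = Vf_oplus b a"
  unfolding Vf_oplus_def by (metis form_sum_commute)

lemma Vf_oplus_Some_iff:
  "Vf_oplus t s = Some u \<longleftrightarrow>
    (form_bounded t \<or> form_bounded s \<or> dom_form t = dom_form s) \<and> u = form_sum t s"
  by (auto simp: Vf_oplus_def)

lemma Vf_oplus_zero_form: "t \<in> Vf \<Longrightarrow> Vf_oplus t zero_form = Some t"
  by (simp add: Vf_oplus_def form_bounded_zero_form form_sum_zero_form)

lemma bind_Vf_oplus:
  assumes "x \<in> Vf" "y \<in> Vf"
  shows "Option.bind (Vf_oplus x y) (\<lambda>u. Vf_oplus u w) =
    (if (form_bounded x \<or> form_bounded y \<or> dom_form x = dom_form y) \<and>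
        (form_bounded x \<and> form_bounded y \<or> form_bounded w \<or> dom_form x \<inter> dom_form y = dom_form w)
     then Some (form_sum (form_sum x y) w) else None)"
  using form_bounded_form_sum_iff[OF assms] by (auto simp: Vf_oplus_def)

lemma Vf_oplus_assoc:
  assumes x: "x \<in> Vf" and y: "y \<in> Vf" and w: "w \<in> Vf"
  shows "Option.bind (Vf_oplus x y) (\<lambda>u. Vf_oplus u w) = Option.bind (Vf_oplus y w) (Vf_oplus x)"
proof -
  have "Option.bind (Vf_oplus y w) (Vf_oplus x) = Option.bind (Vf_oplus w y) (\<lambda>u. Vf_oplus u x)"
    using ext[of "\<lambda>u. Vf_oplus u x" "Vf_oplus x", OF Vf_oplus_commute]
    by (simp add: Vf_oplus_commute[of y w])
  moreover have "form_sum (form_sum w y) x = form_sum (form_sum x y) w"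
    by (metis form_sum_assoc form_sum_commute)
  ultimately show ?thesis
    using Vf_bounded_full[OF x] Vf_bounded_full[OF y] Vf_bounded_full[OF w]
    unfolding bind_Vf_oplus[OF x y] bind_Vf_oplus[OF w y]
    by (cases "form_bounded x"; cases "form_bounded y"; cases "form_bounded w") (auto simp: Int_commute)
qed

lemma form_sum_cancel:
  assumes x: "x \<in> Vf" and y: "y \<in> Vf" and w: "w \<in> Vf"
    and def_y: "form_bounded x \<or> form_bounded y \<or> dom_form x = dom_form y"
    and def_w: "form_bounded x \<or> form_bounded w \<or> dom_form x = dom_form w"
    and eq: "form_sum x y = form_sum x w"
  shows "y = w"
proof -
  have dom: "dom_form x \<inter> dom_form y = dom_form x \<inter> dom_form w"
    using arg_cong[OF eq, of dom_form] by simp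
  have app: "app_form y a b = app_form w a b"
    if "a \<in> dom_form x \<inter> dom_form y" "b \<in> dom_form x \<inter> dom_form y" for a b
    using fun_cong[OF fun_cong[OF arg_cong[OF eq, of app_form], of a], of b] that dom
    by (auto simp: app_form_sum)
  have within_x: "y = w" if "dom_form y = dom_form w" "dom_form y \<subseteq> dom_form x"
    using that by (intro form_eqI[OF Vf_is_form[OF y] Vf_is_form[OF w]]) (auto intro!: app)
  show ?thesis
  proof (cases "form_bounded x")
    case True
    then show ?thesis using within_x dom Vf_bounded_full[OF x] by auto
  next
    case unbounded_x: False
    have bounded_iff: "form_bounded y \<longleftrightarrow> form_bounded w"
    proof
      assume "form_bounded y"
      with unbounded_x def_w have "form_bounded w \<or> dom_form x = dom_form w" by blast
      then show "form_bounded w"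
        using form_bounded_if_quadratic_eq[OF \<open>form_bounded y\<close> y, of w]
          app dom Vf_bounded_full[OF y \<open>form_bounded y\<close>] by auto
    next
      assume "form_bounded w"
      with unbounded_x def_y have "form_bounded y \<or> dom_form x = dom_form y" by blast
      then show "form_bounded y"
        using form_bounded_if_quadratic_eq[OF \<open>form_bounded w\<close> w, of y]
          app dom Vf_bounded_full[OF w \<open>form_bounded w\<close>] by auto
    qed
    show ?thesis
    proof (cases "form_bounded y")
      case True
      then show ?thesis
        using Vf_eq_if_quadratic_eq_on_dense[OF y True w, of "dom_form x"] bounded_iff
          form_dense[OF Vf_is_form[OF x]] app Vf_bounded_full[OF y True] by auto
    next
      case False
      then show ?thesis using within_x bounded_iff unbounded_x def_y def_w by auto
    qed
  qed
qed

lemma form_sum_eq_zero_form: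
  assumes x: "x \<in> Vf" and y: "y \<in> Vf" and eq: "form_sum x y = zero_form"
  shows "x = zero_form"
proof -
  have Dx: "dom_form x = UNIV" and Dy: "dom_form y = UNIV"
    using arg_cong[OF eq, of dom_form] by auto
  have sum: "app_form x a a + app_form y a a = 0" for a
    using fun_cong[OF fun_cong[OF arg_cong[OF eq, of app_form], of a], of a] Dx Dy
    by (simp add: app_form_sum)
  have "app_form x a a = 0" for a
    using sum[of a] Vf_quadratic_nonneg[OF x, of a] Vf_quadratic_nonneg[OF y, of a]
      Vf_quadratic_real[OF x, of a] Dx Dy
    by (simp add: complex_eq_iff)
  then show ?thesis
    using form_eq_if_quadratic_eq[OF Vf_is_form[OF x] Vf_is_form[OF zero_form_in_Vf]] Dx by auto
qed

theorem theorem4p5: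
  assumes "infinite_dimensional TYPE('h::chilbert_space)"
  shows "gen_effect_algebra (Vf :: 'h cform set) Vf_oplus zero_form"
  unfolding gen_effect_algebra_def
proof (intro conjI ballI allI impI)
  fix x y :: "'h cform" and u assume "x \<in> Vf" "y \<in> Vf" "Vf_oplus x y = Some u"
  then show "u \<in> Vf" by (auto simp: Vf_oplus_Some_iff form_sum_in_Vf)
next
  fix x y w :: "'h cform" assume "x \<in> Vf" "y \<in> Vf" "w \<in> Vf"
  then show "Option.bind (Vf_oplus x y) (\<lambda>u. Vf_oplus u w) = Option.bind (Vf_oplus y w) (Vf_oplus x)"
    by (rule Vf_oplus_assoc)
next
  fix x y w :: "'h cform" assume xyw: "x \<in> Vf" "y \<in> Vf" "w \<in> Vf"
    and "Vf_oplus x y \<noteq> None \<and> Vf_oplus x y = Vf_oplus x w"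
  then obtain u where "Vf_oplus x y = Some u" "Vf_oplus x w = Some u" by fastforce
  then show "y = w" using form_sum_cancel[OF xyw] by (simp add: Vf_oplus_Some_iff)
next
  fix x y :: "'h cform" assume xy: "x \<in> Vf" "y \<in> Vf" and "Vf_oplus x y = Some zero_form"
  then have "form_sum x y = zero_form" "form_sum y x = zero_form"
    by (simp_all add: Vf_oplus_Some_iff form_sum_commute[of y x])
  then show "x = zero_form" "y = zero_form"
    using form_sum_eq_zero_form xy by blast+
qed (simp_all add: zero_form_in_Vf Vf_oplus_commute Vf_oplus_zero_form)

end
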